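(* Let $m,n\ge 1$ and let $F\subseteq\{1,\dots,m\}\times\{1,\dots,n\}$ be a binary image with row sums $\mathcal R=(r_1,\dots,r_m)$ and column sums $\mathcal C=(c_1,\dots,c_n)$, where $r_1=n$ and $r_m=0$. Let $L_h$ be the length of the horizontal boundary of $F$. Define $b_i=\#\{j: c_j\ge i\}$ and $d_i=b_i-r_i$ for $i=1,\dots,m$. Then for every integer $t\ge 0$ and every choice of indices $1\le i_1<i_2<\dots<i_{2t+1}\le m$, \[ L_h\ \ge\ 2n+d_{i_1}-d_{i_2}+d_{i_3}-\cdots-d_{i_{2t}}+2d_{i_{2t+1}}, \] \[ L_h\ \ge\ 2n-d_{i_{2t+1}}+d_{i_{2t}}-d_{i_{2t-1}}+\cdots+d_{i_2}-2d_{i_1}. \]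
   Context: A binary image is a finite set $F\subseteq\mathbb Z^2$; point $(i,j)$ lies in row $i$ and column $j$ (row indices increase downwards, column indices to the right). The row sum $r_i$ is the number of points of $F$ in row $i$, and the column sum $c_j$ is the number of points of $F$ in column $j$. The horizontal boundary of $F$ is the set of ordered pairs of points $((i,j),(i',j))$ of $\mathbb Z^2$ with $|i-i'|=1$, $(i,j)\in F$ and $(i',j)\notin F$ (so pieces above the top cell or below the bottom cell of a column also count); its length is the number of such pairs. *)

theory Defs
  imports Main
begin

text \<open>A binary image is a finite set of integer points (row, column).\<close>

definition row_sum :: "(int \<times> int) set \<Rightarrow> int \<Rightarrow> nat" where
  "row_sum F i = card {j. (i, j) \<in> F}"

definition col_sum :: "(int \<times> int) set \<Rightarrow> int \<Rightarrow> nat" where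
  "col_sum F j = card {i. (i, j) \<in> F}"

definition hboundary :: "(int \<times> int) set \<Rightarrow> ((int \<times> int) \<times> (int \<times> int)) set" where
  "hboundary F = {((i, j), (i', j')). j' = j \<and> \<bar>i - i'\<bar> = 1 \<and> (i, j) \<in> F \<and> (i', j') \<notin> F}"

definition hboundary_length :: "(int \<times> int) set \<Rightarrow> nat" where
  "hboundary_length F = card (hboundary F)"

definition bseq :: "(int \<times> int) set \<Rightarrow> int \<Rightarrow> int \<Rightarrow> nat" where
  "bseq F n i = card {j \<in> {1..n}. int (col_sum F j) \<ge> i}"

definition dseq :: "(int \<times> int) set \<Rightarrow> int \<Rightarrow> int \<Rightarrow> int" where
  "dseq F n i = int (bseq F n i) - int (row_sum F i)"

end

theory Submission imports Defs begin

(*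
  The horizontal boundary splits into the columns of the image.  For a
  column with point set S \<subseteq> {1..M}, where 1 \<in> S and M \<notin> S, its boundary length is
  twice the number of descents of the indicator of S (rows y \<in> S with y + 1 \<notin> S),
  and its contribution to d_i is the defect  [i \<le> |S|] - [i \<in> S].  Since the step
  function [i \<le> |S|] never increases, the positive variation of the defect is at most
  the number of descents; an alternating sum over increasing indices is in turn
  bounded by a positive variation.  A short case analysis (S an initial interval or
  not) then gives both inequalities for a single column, and summing over the
  columns 1..n yields the theorem.
*)

section \<open>Positive variation of an integer function\<close>

definition posvar :: "(int \<Rightarrow> int) \<Rightarrow> int \<Rightarrow> int \<Rightarrow> int" where
  "posvar h a b = (\<Sum>y\<in>{a..<b}. max 0 (h (y + 1) - h y))"

lemma posvar_step: "a \<le> b \<Longrightarrow> posvar h a (b + 1) = posvar h a b + max 0 (h (b + 1) - h b)"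
proof -
  assume "a \<le> b"
  then have "{a..<b + 1} = insert b {a..<b}" by auto
  then show ?thesis unfolding posvar_def by simp
qed

lemma posvar_nonneg: "0 \<le> posvar h a b"
  unfolding posvar_def by (rule sum_nonneg) simp

lemma posvar_split: "a \<le> b \<Longrightarrow> b \<le> c \<Longrightarrow> posvar h a c = posvar h a b + posvar h b c"
proof -
  assume "a \<le> b" "b \<le> c"
  then have "{a..<c} = {a..<b} \<union> {b..<c}" by auto
  then show ?thesis unfolding posvar_def by (simp add: sum.union_disjoint)
qed

lemma posvar_ge_increment: "a \<le> b \<Longrightarrow> h b - h a \<le> posvar h a b"
proof (induction b rule: int_ge_induct)
  case base then show ?case by (simp add: posvar_def)
next
  case (step k) then show ?case by (simp add: posvar_step)
qed

lemma posvar_minus_negvar: "a \<le> b \<Longrightarrow> posvar h a b - posvar (\<lambda>y. - h y) a b = h b - h a"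
proof (induction b rule: int_ge_induct)
  case base then show ?case by (simp add: posvar_def)
next
  case (step k) then show ?case by (simp add: posvar_step max_def)
qed

lemma posvar_mono:
  "(\<And>y. a \<le> y \<Longrightarrow> y < b \<Longrightarrow> h (y + 1) - h y \<le> h' (y + 1) - h' y) \<Longrightarrow> posvar h a b \<le> posvar h' a b"
  unfolding posvar_def by (intro sum_mono max.mono) auto

lemma posvar_mono_interval: "a' \<le> a \<Longrightarrow> a \<le> b \<Longrightarrow> b \<le> b' \<Longrightarrow> posvar h a b \<le> posvar h a' b'"
  using posvar_split[of a' a b h] posvar_split[of a' b b' h]
    posvar_nonneg[of h a' a] posvar_nonneg[of h b b'] by linarith

lemma posvar_const:
  assumes "\<And>y. a \<le> y \<Longrightarrow> h y = h a"
  shows "posvar h a b = 0"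
  unfolding posvar_def
proof (intro sum.neutral ballI)
  fix y assume "y \<in> {a..<b}"
  then have "h (y + 1) = h a" "h y = h a" using assms[of y] assms[of "y + 1"] by simp_all
  then show "max 0 (h (y + 1) - h y) = 0" by simp
qed


section \<open>Alternating sums over increasing indices\<close>

lemma increasing_index_mono:
  assumes "\<And>k. k < N \<Longrightarrow> idx k < idx (Suc k)"
  shows "k \<le> N \<Longrightarrow> (idx 0 :: int) \<le> idx k"
proof (induction k)
  case (Suc k) then show ?case using assms[of k] by force
qed simp

text \<open>h(i_0) - h(i_1) + ... - h(i_{2t-1}) + h(i_{2t}) - h(a) is a sum of increments of h
  over disjoint subintervals of [a, i_{2t}], hence bounded by the positive variation.\<close>
lemma alternating_sum_le_posvar:
  fixes h :: "int \<Rightarrow> int" and idx :: "nat \<Rightarrow> int"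
  shows "(\<And>k. k < 2 * t \<Longrightarrow> idx k < idx (Suc k)) \<Longrightarrow> a \<le> idx 0 \<Longrightarrow>
    (\<Sum>k<2 * t. (-1) ^ k * h (idx k)) + h (idx (2 * t)) \<le> h a + posvar h a (idx (2 * t))"
proof (induction t)
  case 0 then show ?case using posvar_ge_increment[of a "idx 0" h] by simp
next
  case (Suc t)
  have IH: "(\<Sum>k<2 * t. (-1) ^ k * h (idx k)) + h (idx (2 * t)) \<le> h a + posvar h a (idx (2 * t))"
    using Suc by auto
  have two_Suc: "2 * Suc t = 2 * t + 2" by simp
  have i01: "idx (2 * t) < idx (2 * t + 1)" "idx (2 * t + 1) < idx (2 * t + 2)"
    using Suc.prems(1)[of "2 * t"] Suc.prems(1)[of "2 * t + 1"] by simp_all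
  have "a \<le> idx (2 * t)"
    using increasing_index_mono[of "2 * Suc t" idx "2 * t"] Suc.prems by simp
  then have "posvar h a (idx (2 * t + 2)) = posvar h a (idx (2 * t))
      + posvar h (idx (2 * t)) (idx (2 * t + 1)) + posvar h (idx (2 * t + 1)) (idx (2 * t + 2))"
    using posvar_split[of a "idx (2 * t)" "idx (2 * t + 2)" h] i01
      posvar_split[of "idx (2 * t)" "idx (2 * t + 1)" "idx (2 * t + 2)" h] by simp
  moreover have "h (idx (2 * t + 2)) - h (idx (2 * t + 1)) \<le> posvar h (idx (2 * t + 1)) (idx (2 * t + 2))"
    using posvar_ge_increment i01 by simp
  moreover have "(\<Sum>k<2 * t + 2. (-1) ^ k * h (idx k))
      = (\<Sum>k<2 * t. (-1) ^ k * h (idx k)) + h (idx (2 * t)) - h (idx (2 * t + 1))"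
    by simp
  ultimately show ?case unfolding two_Suc
    using IH posvar_nonneg[of h "idx (2 * t)" "idx (2 * t + 1)"] by linarith
qed

lemma alternating_sum_le_posvar':
  fixes h :: "int \<Rightarrow> int" and idx :: "nat \<Rightarrow> int"
  shows "(\<And>k. k < 2 * t \<Longrightarrow> idx k < idx (Suc k)) \<Longrightarrow>
    - h (idx 0) + (\<Sum>k\<in>{1..2 * t}. (-1) ^ (k + 1) * h (idx k)) + h (idx (2 * t))
      \<le> posvar h (idx 0) (idx (2 * t))"
proof (induction t)
  case 0 then show ?case by (simp add: posvar_def)
next
  case (Suc t)
  have IH: "- h (idx 0) + (\<Sum>k\<in>{1..2 * t}. (-1) ^ (k + 1) * h (idx k)) + h (idx (2 * t))
      \<le> posvar h (idx 0) (idx (2 * t))"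
    using Suc by auto
  have two_Suc: "2 * Suc t = 2 * t + 2" by simp
  have i01: "idx (2 * t) < idx (2 * t + 1)" "idx (2 * t + 1) < idx (2 * t + 2)"
    using Suc.prems(1)[of "2 * t"] Suc.prems(1)[of "2 * t + 1"] by simp_all
  have "idx 0 \<le> idx (2 * t)"
    using increasing_index_mono[of "2 * Suc t" idx "2 * t"] Suc.prems by simp
  then have "posvar h (idx 0) (idx (2 * t + 2)) = posvar h (idx 0) (idx (2 * t))
      + posvar h (idx (2 * t)) (idx (2 * t + 1)) + posvar h (idx (2 * t + 1)) (idx (2 * t + 2))"
    using posvar_split[of "idx 0" "idx (2 * t)" "idx (2 * t + 2)" h] i01
      posvar_split[of "idx (2 * t)" "idx (2 * t + 1)" "idx (2 * t + 2)" h] by simp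
  moreover have "h (idx (2 * t + 1)) - h (idx (2 * t)) \<le> posvar h (idx (2 * t)) (idx (2 * t + 1))"
    using posvar_ge_increment i01 by simp
  moreover have "(\<Sum>k\<in>{1..2 * t + 2}. (-1) ^ (k + 1) * h (idx k))
      = (\<Sum>k\<in>{1..2 * t}. (-1) ^ (k + 1) * h (idx k)) + h (idx (2 * t + 1)) - h (idx (2 * t + 2))"
    by simp
  ultimately show ?case unfolding two_Suc
    using IH posvar_nonneg[of h "idx (2 * t + 1)" "idx (2 * t + 2)"] by linarith
qed


section \<open>Descents and defect of a set of rows\<close>

definition ind :: "int set \<Rightarrow> int \<Rightarrow> int" where
  "ind S y = (if y \<in> S then 1 else 0)"

text \<open>Number of rows y \<in> [a, b) with y \<in> S and y + 1 \<notin> S.\<close>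
definition descents :: "int set \<Rightarrow> int \<Rightarrow> int \<Rightarrow> int" where
  "descents S a b = posvar (\<lambda>y. - ind S y) a b"

text \<open>Contribution of a column S to d_y: the column sorted to the top minus the column itself.\<close>
definition defect :: "int set \<Rightarrow> int \<Rightarrow> int" where
  "defect S y = (if y \<le> int (card S) then 1 else 0) - ind S y"

lemma defect_interval: "0 \<le> c \<Longrightarrow> 1 \<le> y \<Longrightarrow> defect {1..c} y = 0"
  unfolding defect_def ind_def by auto

lemma descents_nonneg: "0 \<le> descents S a b"
  unfolding descents_def by (rule posvar_nonneg)

lemma descents_split: "a \<le> b \<Longrightarrow> b \<le> c \<Longrightarrow> descents S a c = descents S a b + descents S b c"
  unfolding descents_def by (rule posvar_split)

lemma descents_mono_interval: "a' \<le> a \<Longrightarrow> a \<le> b \<Longrightarrow> b \<le> b' \<Longrightarrow> descents S a b \<le> descents S a' b'"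
  unfolding descents_def by (rule posvar_mono_interval)

lemma descents_ge_1: "a \<le> b \<Longrightarrow> a \<in> S \<Longrightarrow> b \<notin> S \<Longrightarrow> 1 \<le> descents S a b"
  using posvar_ge_increment[of a b "\<lambda>y. - ind S y"] unfolding descents_def ind_def by simp

text \<open>Every positive increment of the defect is a descent of S, because the step
  function [y \<le> |S|] never increases.\<close>
lemma posvar_defect_le_descents: "posvar (defect S) a b \<le> descents S a b"
  unfolding descents_def defect_def by (rule posvar_mono) auto

text \<open>For S \<subseteq> {1..m}: the number of ascents of its indicator on [0, m+1] equals the
  number of descents, and all descents lie in [1, m+1).\<close>
lemma ascents_plus_descents:
  assumes "S \<subseteq> {1..m}" "0 \<le> m"
  shows "posvar (ind S) 0 (m + 1) + descents S 0 (m + 1) = 2 * descents S 1 (m + 1)"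
proof -
  have ends: "ind S 0 = 0" "ind S (m + 1) = 0" using assms unfolding ind_def by auto
  have "posvar (ind S) 0 (m + 1) = descents S 0 (m + 1)"
    using posvar_minus_negvar[of 0 "m + 1" "ind S"] assms(2) ends unfolding descents_def by simp
  moreover have "descents S 0 1 = 0"
  proof -
    have "{0..<1 :: int} = {0}" by auto
    then show ?thesis using ends unfolding descents_def posvar_def ind_def by simp
  qed
  ultimately show ?thesis using descents_split[of 0 1 "m + 1" S] assms(2) by simp
qed


section \<open>Bounds for a single column\<close>

locale column =
  fixes S :: "int set" and M :: int
  assumes rows: "S \<subseteq> {1..M}" and first: "1 \<in> S" and last: "M \<notin> S"
begin

lemma finite_rows: "finite S"
  using rows finite_subset by blast

lemma card_bounds: "1 \<le> int (card S)" "int (card S) < M"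
proof -
  show "1 \<le> int (card S)" using finite_rows first card_gt_0_iff[of S] by force
  have "S \<subseteq> {1..M - 1}"
  proof
    fix y assume "y \<in> S"
    then have "1 \<le> y" "y \<le> M" "y \<noteq> M" using rows last by auto
    then show "y \<in> {1..M - 1}" by simp
  qed
  then have "card S \<le> card {1..M - 1}" by (intro card_mono) simp_all
  moreover have "1 \<le> M" "M \<noteq> 1" using first last rows by auto
  ultimately show "int (card S) < M" by simp
qed

lemma defect_ends: "defect S 1 = 0" "defect S M = 0"
  using card_bounds first last unfolding defect_def ind_def by auto

lemma some_descent: "1 \<le> descents S 1 M"
  using descents_ge_1[of 1 M S] first last rows by auto

lemma interval_or_gap:
  obtains c where "S = {1..c}" "0 \<le> c"
  | y0 z where "1 \<le> y0" "y0 \<le> int (card S)" "y0 \<notin> S" "z \<in> S" "int (card S) < z"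
proof (cases "S = {1..int (card S)}")
  case True
  then show ?thesis using that(1)[OF True] by simp
next
  case False
  have same_card: "card {1..int (card S)} = card S" by simp
  then obtain y0 where "y0 \<in> {1..int (card S)}" "y0 \<notin> S"
    using card_subset_eq[OF finite_rows _ same_card] False by blast
  moreover obtain z where "z \<in> S" "z \<notin> {1..int (card S)}"
  proof -
    have "\<not> S \<subseteq> {1..int (card S)}"
      using card_subset_eq[of "{1..int (card S)}" S] same_card False by auto
    then show ?thesis using that by blast
  qed
  moreover from this have "1 \<le> z" using rows by auto
  ultimately show ?thesis using that(2)[of y0 z] by force
qed

text \<open>Key estimate behind the first inequality.  If S is not an initial interval, the
  descents needed are found near x, near the missing row y0 and near the extra row z.\<close>
lemma forward_bound:
  assumes x: "1 \<le> x" "x \<le> M"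
  shows "2 + posvar (defect S) 1 x + defect S x \<le> 2 * descents S 1 M"
proof (cases rule: interval_or_gap)
  case (1 c)
  then have vanish: "defect S y = 0" if "1 \<le> y" for y using defect_interval that by simp
  have "posvar (defect S) 1 x = 0" "defect S x = 0"
    using posvar_const[of 1 "defect S"] vanish x by simp_all
  then show ?thesis using some_descent by simp
next
  case (2 y0 z)
  note gap = this
  have "z \<le> M" using \<open>z \<in> S\<close> rows by auto
  have split: "descents S 1 M = descents S 1 x + descents S x M"
    using descents_split[of 1 x M S] x by simp
  have "defect S x \<le> 1" unfolding defect_def ind_def by simp
  moreover have "posvar (defect S) 1 x \<le> descents S 1 x" by (rule posvar_defect_le_descents)
  moreover have "2 + defect S x \<le> descents S 1 x + 2 * descents S x M"
  proof -
    consider "x \<in> S" | "x \<notin> S" "x < z" | "x \<notin> S" "z < x"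
      using \<open>z \<in> S\<close> by fastforce
    then show ?thesis
    proof cases
      case 1
      then have "defect S x \<le> 0" unfolding defect_def ind_def by simp
      then show ?thesis
        using descents_ge_1[of x M S] descents_nonneg[of S 1 x] 1 x last by linarith
    next
      case 2
      have "1 \<le> descents S z M"
        using descents_ge_1[of z M S] \<open>z \<in> S\<close> \<open>z \<le> M\<close> last by simp
      moreover have "descents S z M \<le> descents S x M"
        using descents_mono_interval[of x z M M S] 2 \<open>z \<le> M\<close> by simp
      moreover have "1 \<le> descents S 1 x" using descents_ge_1[of 1 x S] 2 x first by simp
      ultimately show ?thesis using \<open>defect S x \<le> 1\<close> by linarith
    next
      case 3
      then have "defect S x = 0" using gap unfolding defect_def ind_def by auto
      have "descents S 1 x = descents S 1 y0 + descents S y0 z + descents S z x"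
        using descents_split[of 1 y0 x S] descents_split[of y0 z x S] gap 3 by simp
      moreover have "1 \<le> descents S 1 y0" "1 \<le> descents S z x"
        using descents_ge_1[of 1 y0 S] descents_ge_1[of z x S] gap 3 first by simp_all
      ultimately show ?thesis
        using \<open>defect S x = 0\<close> descents_nonneg[of S y0 z] descents_nonneg[of S x M] by linarith
    qed
  qed
  ultimately show ?thesis using split by linarith
qed

lemma backward_bound:
  assumes a: "1 \<le> a" "a \<le> M"
  shows "2 + posvar (defect S) a M - defect S a \<le> 2 * descents S 1 M"
proof (cases rule: interval_or_gap)
  case (1 c)
  then have vanish: "defect S y = 0" if "1 \<le> y" for y using defect_interval that by simp
  have "posvar (defect S) a M = 0" "defect S a = 0"
    using posvar_const[of a "defect S"] vanish a by simp_all
  then show ?thesis using some_descent by simp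
next
  case (2 y0 z)
  note gap = this
  have "z \<le> M" using \<open>z \<in> S\<close> rows by auto
  have split: "descents S 1 M = descents S 1 a + descents S a M"
    using descents_split[of 1 a M S] a by simp
  have "posvar (defect S) a M \<le> descents S a M" by (rule posvar_defect_le_descents)
  moreover have "2 - defect S a \<le> 2 * descents S 1 a + descents S a M"
  proof -
    consider "a \<notin> S" | "a \<in> S" "y0 < a" | "a \<in> S" "a < y0"
      using \<open>y0 \<notin> S\<close> by fastforce
    then show ?thesis
    proof cases
      case 1
      then have "0 \<le> defect S a" unfolding defect_def ind_def by simp
      then show ?thesis
        using descents_ge_1[of 1 a S] descents_nonneg[of S a M] 1 a first by linarith
    next
      case 2
      have "1 \<le> descents S 1 y0" using descents_ge_1[of 1 y0 S] gap first by simp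
      moreover have "descents S 1 y0 \<le> descents S 1 a"
        using descents_mono_interval[of 1 1 y0 a S] gap 2 by simp
      moreover have "1 \<le> descents S a M" using descents_ge_1[of a M S] 2 a last by simp
      moreover have "-1 \<le> defect S a" unfolding defect_def ind_def by simp
      ultimately show ?thesis by linarith
    next
      case 3
      then have "defect S a = 0" using gap unfolding defect_def ind_def by auto
      have "descents S a M = descents S a y0 + descents S y0 z + descents S z M"
        using descents_split[of a y0 M S] descents_split[of y0 z M S] gap 3 \<open>z \<le> M\<close> by simp
      moreover have "1 \<le> descents S a y0" "1 \<le> descents S z M"
        using descents_ge_1[of a y0 S] descents_ge_1[of z M S] gap 3 \<open>z \<le> M\<close> last by simp_all
      ultimately show ?thesis
        using \<open>defect S a = 0\<close> descents_nonneg[of S y0 z] descents_nonneg[of S 1 a] by linarith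
    qed
  qed
  ultimately show ?thesis using split by linarith
qed

lemma alternating_bounds:
  fixes t :: nat and idx :: "nat \<Rightarrow> int"
  assumes increasing: "\<And>k. k < 2 * t \<Longrightarrow> idx k < idx (Suc k)"
    and "1 \<le> idx 0" and "idx (2 * t) \<le> M"
  shows "2 + (\<Sum>k<2 * t. (-1) ^ k * defect S (idx k)) + 2 * defect S (idx (2 * t))
           \<le> 2 * descents S 1 M"
    and "2 + (\<Sum>k\<in>{1..2 * t}. (-1) ^ (k + 1) * defect S (idx k)) - 2 * defect S (idx 0)
           \<le> 2 * descents S 1 M"
proof -
  have ordered: "idx 0 \<le> idx (2 * t)" using increasing_index_mono increasing by blast
  show "2 + (\<Sum>k<2 * t. (-1) ^ k * defect S (idx k)) + 2 * defect S (idx (2 * t))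
           \<le> 2 * descents S 1 M"
    using alternating_sum_le_posvar[of t idx 1 "defect S"] increasing assms(2,3) ordered
      forward_bound[of "idx (2 * t)"] defect_ends by simp
  have "posvar (defect S) (idx 0) M
      = posvar (defect S) (idx 0) (idx (2 * t)) + posvar (defect S) (idx (2 * t)) M"
    using posvar_split ordered assms(3) by blast
  moreover have "defect S M - defect S (idx (2 * t)) \<le> posvar (defect S) (idx (2 * t)) M"
    using posvar_ge_increment assms(3) by blast
  moreover have "idx 0 \<le> M" using ordered assms(3) by simp
  ultimately show "2 + (\<Sum>k\<in>{1..2 * t}. (-1) ^ (k + 1) * defect S (idx k)) - 2 * defect S (idx 0)
           \<le> 2 * descents S 1 M"
    using alternating_sum_le_posvar'[of t idx "defect S", OF increasing]
      backward_bound[OF assms(2)] defect_ends by linarith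
qed

end


section \<open>Decomposition into columns\<close>

definition col :: "(int \<times> int) set \<Rightarrow> int \<Rightarrow> int set" where
  "col F j = {i. (i, j) \<in> F}"

lemma sum_indicator_card: "finite A \<Longrightarrow> (\<Sum>j\<in>A. if P j then 1 else 0) = int (card {j \<in> A. P j})"
  by (simp add: sum.If_cases Int_def)

lemma card_by_columns:
  fixes X :: "(int \<times> int) set"
  assumes "X \<subseteq> A \<times> B" "finite A" "finite B"
  shows "int (card X) = (\<Sum>j\<in>B. \<Sum>i\<in>A. if (i, j) \<in> X then 1 else 0)"
proof -
  have "X = (A \<times> B) \<inter> {p. p \<in> X}" using assms by auto
  then have "int (card X) = (\<Sum>p\<in>A \<times> B. of_bool (p \<in> X))"
    using assms by (simp add: sum_of_bool_eq)
  also have "\<dots> = (\<Sum>i\<in>A. \<Sum>j\<in>B. of_bool ((i, j) \<in> X))"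
    by (simp add: sum.cartesian_product)
  also have "\<dots> = (\<Sum>j\<in>B. \<Sum>i\<in>A. of_bool ((i, j) \<in> X))"
    by (rule sum.swap)
  finally show ?thesis by (simp add: of_bool_def)
qed

lemma hboundary_length_split:
  assumes "finite F"
  shows "hboundary_length F = card {(i, j). (i, j) \<in> F \<and> (i + 1, j) \<notin> F}
                             + card {(i, j). (i + 1, j) \<in> F \<and> (i, j) \<notin> F}"
proof -
  define D where "D = {(i, j). (i, j) \<in> F \<and> (i + 1, j) \<notin> F}"
  define U where "U = {(i, j). (i + 1, j) \<in> F \<and> (i, j) \<notin> F}"
  define down where "down = (\<lambda>(i :: int, j :: int). ((i, j), (i + 1, j)))"
  define up where "up = (\<lambda>(i :: int, j :: int). ((i + 1, j), (i, j)))"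
  have "hboundary F = down ` D \<union> up ` U"
  proof (intro set_eqI iffI)
    fix p assume "p \<in> hboundary F"
    then obtain i j i' where p: "p = ((i, j), (i', j))" "\<bar>i - i'\<bar> = 1" "(i, j) \<in> F" "(i', j) \<notin> F"
      unfolding hboundary_def by auto
    then consider "i' = i + 1" | "i = i' + 1" by linarith
    then show "p \<in> down ` D \<union> up ` U"
      by cases (use p in \<open>force simp: down_def up_def D_def U_def\<close>)+
  qed (auto simp: hboundary_def down_def up_def D_def U_def)
  moreover have "finite D" using assms unfolding D_def by (rule rev_finite_subset) auto
  moreover have "finite U"
    using assms by (rule rev_finite_subset[OF finite_imageI[of F "\<lambda>(i, j). (i - 1, j)"]])
      (force simp: U_def)
  moreover have "inj_on down D" "inj_on up U" "down ` D \<inter> up ` U = {}"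
    unfolding down_def up_def inj_on_def by auto
  ultimately show ?thesis
    unfolding hboundary_length_def D_def [symmetric] U_def [symmetric]
    by (simp add: card_Un_disjoint card_image)
qed

lemma hboundary_length_by_columns:
  assumes F: "F \<subseteq> {1..m} \<times> {1..n}" and "0 \<le> m"
  shows "int (hboundary_length F) = (\<Sum>j\<in>{1..n}. 2 * descents (col F j) 1 (m + 1))"
proof -
  let ?D = "{(i, j). (i, j) \<in> F \<and> (i + 1, j) \<notin> F}"
  let ?U = "{(i, j). (i + 1, j) \<in> F \<and> (i, j) \<notin> F}"
  have "finite F" using F finite_subset by blast
  have "?D \<subseteq> {0..<m + 1} \<times> {1..n}" "?U \<subseteq> {0..<m + 1} \<times> {1..n}" using F by auto
  then have "int (card ?D) = (\<Sum>j\<in>{1..n}. descents (col F j) 0 (m + 1))"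
      and "int (card ?U) = (\<Sum>j\<in>{1..n}. posvar (ind (col F j)) 0 (m + 1))"
    by (auto simp: card_by_columns descents_def posvar_def ind_def col_def intro!: sum.cong)
  then have "int (hboundary_length F)
      = (\<Sum>j\<in>{1..n}. posvar (ind (col F j)) 0 (m + 1) + descents (col F j) 0 (m + 1))"
    using hboundary_length_split[OF \<open>finite F\<close>] by (simp add: sum.distrib add.commute)
  also have "\<dots> = (\<Sum>j\<in>{1..n}. 2 * descents (col F j) 1 (m + 1))"
  proof (rule sum.cong)
    fix j
    have "col F j \<subseteq> {1..m}" using F unfolding col_def by auto
    then show "posvar (ind (col F j)) 0 (m + 1) + descents (col F j) 0 (m + 1)
      = 2 * descents (col F j) 1 (m + 1)"
      using ascents_plus_descents \<open>0 \<le> m\<close> by blast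
  qed simp
  finally show ?thesis .
qed

lemma dseq_by_columns:
  assumes "F \<subseteq> A \<times> {1..n}"
  shows "dseq F n i = (\<Sum>j\<in>{1..n}. defect (col F j) i)"
proof -
  have "int (bseq F n i) = (\<Sum>j\<in>{1..n}. if i \<le> int (card (col F j)) then 1 else 0)"
    unfolding bseq_def col_sum_def col_def by (simp add: sum_indicator_card)
  moreover have "{j \<in> {1..n}. (i, j) \<in> F} = {j. (i, j) \<in> F}" using assms by auto
  then have "int (row_sum F i) = (\<Sum>j\<in>{1..n}. ind (col F j) i)"
    unfolding row_sum_def ind_def col_def by (simp add: sum_indicator_card)
  ultimately show ?thesis unfolding dseq_def defect_def by (simp add: sum_subtractf)
qed

lemma column_of_image:
  assumes F: "F \<subseteq> {1..m} \<times> {1..n}" and full: "row_sum F 1 = nat n" and j: "j \<in> {1..n}"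
  shows "column (col F j) (m + 1)"
proof
  have "{j. (1, j) \<in> F} \<subseteq> {1..n}" using F by auto
  moreover have "card {j. (1, j) \<in> F} = card {1..n}" using full unfolding row_sum_def by simp
  ultimately have "{j. (1, j) \<in> F} = {1..n}" using card_subset_eq[of "{1..n}"] by simp
  then show "1 \<in> col F j" using j unfolding col_def by blast
qed (use F in \<open>auto simp: col_def\<close>)

lemma sum_column_bounds:
  fixes g :: "int \<Rightarrow> int \<Rightarrow> int" and K :: "nat set"
  assumes "\<And>j. j \<in> J \<Longrightarrow> 2 + (\<Sum>k\<in>K. c k * g j (p k)) + e * g j q \<le> V j"
  shows "2 * int (card J) + (\<Sum>k\<in>K. c k * (\<Sum>j\<in>J. g j (p k))) + e * (\<Sum>j\<in>J. g j q) \<le> sum V J"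
proof -
  have "(\<Sum>j\<in>J. 2 + (\<Sum>k\<in>K. c k * g j (p k)) + e * g j q) \<le> sum V J"
    using assms by (rule sum_mono)
  moreover have "(\<Sum>j\<in>J. \<Sum>k\<in>K. c k * g j (p k)) = (\<Sum>k\<in>K. c k * (\<Sum>j\<in>J. g j (p k)))"
    unfolding sum_distrib_left by (rule sum.swap)
  ultimately show ?thesis by (simp add: sum.distrib sum_distrib_left)
qed


theorem theorem3p1:
  fixes m n :: int and F :: "(int \<times> int) set" and t :: nat and idx :: "nat \<Rightarrow> int"
  assumes "m \<ge> 1" and "n \<ge> 1"
    and "F \<subseteq> {1..m} \<times> {1..n}"
    and "row_sum F 1 = nat n" and "row_sum F m = 0"
    and "1 \<le> idx 0" and "idx (2 * t) \<le> m"
    and "\<And>k. k < 2 * t \<Longrightarrow> idx k < idx (Suc k)"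
  shows "int (hboundary_length F) \<ge>
           2 * n + (\<Sum>k<2 * t. (-1) ^ k * dseq F n (idx k)) + 2 * dseq F n (idx (2 * t))
       \<and> int (hboundary_length F) \<ge>
           2 * n
             + (\<Sum>k\<in>{1..2 * t}. (-1) ^ (k + 1) * dseq F n (idx k)) - 2 * dseq F n (idx 0)"
proof -
  have boundary: "int (hboundary_length F) = (\<Sum>j\<in>{1..n}. 2 * descents (col F j) 1 (m + 1))"
    using hboundary_length_by_columns assms(1,3) by simp
  have d: "dseq F n i = (\<Sum>j\<in>{1..n}. defect (col F j) i)" for i
    by (rule dseq_by_columns[OF assms(3)])
  have columns: "column (col F j) (m + 1)" if "j \<in> {1..n}" for j
    by (rule column_of_image[OF assms(3,4) that])
  have "idx (2 * t) \<le> m + 1" using assms(7) by simp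
  then have bounds: "2 + (\<Sum>k<2 * t. (-1) ^ k * defect (col F j) (idx k))
                       + 2 * defect (col F j) (idx (2 * t)) \<le> 2 * descents (col F j) 1 (m + 1)"
                    "2 + (\<Sum>k\<in>{1..2 * t}. (-1) ^ (k + 1) * defect (col F j) (idx k))
                       + (-2) * defect (col F j) (idx 0) \<le> 2 * descents (col F j) 1 (m + 1)"
    if "j \<in> {1..n}" for j
    using column.alternating_bounds[OF columns[OF that], of t idx] assms(6,8) by simp_all
  have "2 * int (card {1..n}) + (\<Sum>k<2 * t. (-1) ^ k * (\<Sum>j\<in>{1..n}. defect (col F j) (idx k)))
      + 2 * (\<Sum>j\<in>{1..n}. defect (col F j) (idx (2 * t))) \<le> int (hboundary_length F)"
    unfolding boundary by (rule sum_column_bounds[where g = "\<lambda>j. defect (col F j)", OF bounds(1)])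
  moreover have "2 * int (card {1..n}) + (\<Sum>k\<in>{1..2 * t}. (-1) ^ (k + 1) * (\<Sum>j\<in>{1..n}. defect (col F j) (idx k)))
      + (-2) * (\<Sum>j\<in>{1..n}. defect (col F j) (idx 0)) \<le> int (hboundary_length F)"
    unfolding boundary by (rule sum_column_bounds[where g = "\<lambda>j. defect (col F j)", OF bounds(2)])
  moreover have "int (card {1..n}) = n" using assms(2) by simp
  ultimately show ?thesis unfolding d by linarith
qed

end
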